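(* Let $\lambda=\langle\lambda_j\rangle_{j=1}^\infty$ with $0<\lambda_j<\frac12$ for all $j$ and $\sum_{j=1}^\infty\lambda_j<1$. Let $\{u_j\}_{j\ge1}$ be unit vectors in a separable Hilbert space $H$ such that $\sum_{j=2}^\infty u_j\otimes u_j$ converges in the strong operator topology, and let $$B=\Big(1-\sum_{j=1}^\infty\lambda_j\Big)u_1\otimes u_1+\sum_{j=2}^\infty u_j\otimes u_j.$$ Then $\langle 1-\lambda_j\rangle_{j=1}^\infty\in\operatorname{Adm}(B)$.
   Context: For vectors $x,y$, $x\otimes y$ denotes the rank-one operator $z\mapsto(z,y)x$. $\operatorname{Adm}(B)$ is the set of sequences $\xi\in\ell^\infty_+$ such that $B=\sum_j\xi_jP_j$ for some rank-one projections $P_j$ (series converging in the strong operator topology if infinite). *)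

theory Defs
  imports "HOL-Analysis.Analysis"
begin

text \<open>HOL-Analysis only provides real inner product
spaces, so we add a complex scalar multiplication and a complex inner product
(linear in the first argument) compatible with the real structure: the real
inner product is the real part of the complex one.\<close>

class complex_inner = real_inner +
  fixes scaleC :: "complex \<Rightarrow> 'a \<Rightarrow> 'a" (infixr "*\<^sub>C" 75)
    and cinner :: "'a \<Rightarrow> 'a \<Rightarrow> complex"
  assumes scaleC_of_real: "scaleC (complex_of_real r) x = scaleR r x"
    and scaleC_add_right: "scaleC a (x + y) = scaleC a x + scaleC a y"
    and scaleC_add_left: "scaleC (a + b) x = scaleC a x + scaleC b x"
    and scaleC_scaleC: "scaleC a (scaleC b x) = scaleC (a * b) x"
    and cinner_commute: "cinner x y = cnj (cinner y x)"
    and cinner_add_left: "cinner (x + y) z = cinner x z + cinner y z"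
    and cinner_scaleC_left: "cinner (scaleC a x) y = a * cinner x y"
    and Re_cinner: "Re (cinner x y) = inner x y"

text \<open>Sanity check: the class is inhabited (by the complex numbers).\<close>
instantiation complex :: complex_inner
begin
definition scaleC_complex :: "complex \<Rightarrow> complex \<Rightarrow> complex" where
  "scaleC_complex a x = a * x"
definition cinner_complex :: "complex \<Rightarrow> complex \<Rightarrow> complex" where
  "cinner_complex x y = x * cnj y"
instance
  by standard (auto simp: scaleC_complex_def cinner_complex_def algebra_simps
      scaleR_conv_of_real inner_complex_def)
end

definition rank_one :: "'a::complex_inner \<Rightarrow> 'a \<Rightarrow> 'a \<Rightarrow> 'a" where
  "rank_one x y = (\<lambda>z. cinner z y *\<^sub>C x)"

definition rank_one_proj :: "('a::complex_inner \<Rightarrow> 'a) \<Rightarrow> bool" where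
  "rank_one_proj P \<longleftrightarrow> (\<exists>v. norm v = 1 \<and> P = rank_one v v)"

definition sot_sums :: "(nat \<Rightarrow> 'a::real_normed_vector \<Rightarrow> 'a) \<Rightarrow> ('a \<Rightarrow> 'a) \<Rightarrow> bool" where
  "sot_sums T B \<longleftrightarrow> (\<forall>z. (\<lambda>j. T j z) sums B z)"

definition sot_summable :: "(nat \<Rightarrow> 'a::real_normed_vector \<Rightarrow> 'a) \<Rightarrow> bool" where
  "sot_summable T \<longleftrightarrow> (\<exists>B. sot_sums T B)"

text \<open>Adm(B) for infinite sequences (indexed from 0): nonnegative bounded sequences
\<xi> with B = \<Sum>_j \<xi>_j P_j (SOT) for rank-one projections P_j.\<close>
definition Adm :: "('a::complex_inner \<Rightarrow> 'a) \<Rightarrow> (nat \<Rightarrow> real) set" where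
  "Adm B = {\<xi>. (\<forall>j. 0 \<le> \<xi> j) \<and> bdd_above (range \<xi>) \<and>
     (\<exists>P. (\<forall>j. rank_one_proj (P j)) \<and>
          sot_sums (\<lambda>j z. complex_of_real (\<xi> j) *\<^sub>C P j z) B)}"

definition separable_space :: "'a::topological_space itself \<Rightarrow> bool" where
  "separable_space _ \<longleftrightarrow> (\<exists>D::'a set. countable D \<and> closure D = UNIV)"

end

theory Submission
  imports Defs
begin

text \<open>Write T k for the tail sum of lam from k on. Starting from w 0 = u 0, one rank-one term is
split off at a time. Multiplying u (k+1) by a phase makes it orthogonal to w k for the real inner
product without changing its rank-one projection, so (1 - T k) w k \<otimes> w k + u (k+1) \<otimes> u (k+1)
acts on a real plane; its trace is (1 - lam k) + (1 - T (k+1)), and it equals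
(1 - lam k) p k \<otimes> p k + (1 - T (k+1)) w (k+1) \<otimes> w (k+1) for explicit unit vectors p k, w (k+1).
Hence the partial sums of \<Sum> (1 - lam j) p j \<otimes> p j differ from those of B by the remainder
(1 - T n) w n \<otimes> w n. This remainder tends to 0 strongly: for fixed z,
|(z, w (k+1))|^2 \<le> sqrt (T (k+1) / T k) |(z, w k)|^2 + 2 |(z, u (k+1))|^2 / (1 - \<Sum> lam);
the damping factors telescope to sqrt (T n / T N) \<longrightarrow> 0, and the perturbations are summable
because \<Sum> u j \<otimes> u j converges strongly.\<close>

lemma cinner_add_right: "cinner x (y + z) = cinner x y + cinner x z"
  by (metis cinner_commute cinner_add_left complex_cnj_add)

lemma cinner_scaleC_right: "cinner x (a *\<^sub>C y) = cnj a * cinner x y"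
  by (metis cinner_commute cinner_scaleC_left complex_cnj_mult complex_cnj_cnj)

lemma cinner_scaleR_right: "cinner x (a *\<^sub>R y) = of_real a * cinner x y"
  by (simp flip: scaleC_of_real add: cinner_scaleC_right)

lemma scaleC_scaleR_commute: "c *\<^sub>C (a *\<^sub>R x) = a *\<^sub>R (c *\<^sub>C x)"
  by (simp flip: scaleC_of_real add: scaleC_scaleC mult.commute)

lemma cinner_self: "cinner x x = of_real ((norm x)\<^sup>2)"
proof -
  have "Im (cinner x x) = 0"
    using cinner_commute[of x x] by (metis Im_complex_of_real Reals_cnj_iff complex_is_Real_iff)
  then show ?thesis
    by (simp add: complex_eq_iff Re_cinner power2_norm_eq_inner)
qed

lemma norm_scaleC: "norm (a *\<^sub>C x) = cmod a * norm x"
proof -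
  have "cinner (a *\<^sub>C x) (a *\<^sub>C x) = (a * cnj a) * cinner x x"
    by (simp add: cinner_scaleC_left cinner_scaleC_right mult.assoc)
  also have "\<dots> = of_real ((cmod a * norm x)\<^sup>2)"
    by (simp add: cinner_self power_mult_distrib flip: complex_norm_square)
  finally have "(norm (a *\<^sub>C x))\<^sup>2 = (cmod a * norm x)\<^sup>2"
    by (simp add: power2_norm_eq_inner flip: Re_cinner)
  then show ?thesis
    by (simp add: power2_eq_iff_nonneg)
qed

lemma inner_rank_one_self: "inner (rank_one y y z) z = (cmod (cinner z y))\<^sup>2"
  by (simp add: rank_one_def flip: Re_cinner)
     (simp add: cinner_scaleC_left cinner_commute[of y z] flip: complex_norm_square)

lemma norm_rank_one_self: "norm y = 1 \<Longrightarrow> norm (rank_one y y z) = cmod (cinner z y)"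
  by (simp add: rank_one_def norm_scaleC)

lemma rank_one_scaleC_self:
  assumes "cmod c = 1"
  shows "rank_one (c *\<^sub>C y) (c *\<^sub>C y) = rank_one y y"
proof -
  have "c * cnj c = 1"
    using assms by (metis complex_norm_square of_real_1 power_one)
  then show ?thesis
    by (simp add: fun_eq_iff rank_one_def cinner_scaleC_right scaleC_scaleC)
       (metis mult.commute mult.left_commute mult_1)
qed

lemma rank_one_scaleR_add:
  "rank_one (a *\<^sub>R x + b *\<^sub>R y) (a *\<^sub>R x + b *\<^sub>R y) z =
     a\<^sup>2 *\<^sub>R rank_one x x z + (a * b) *\<^sub>R (rank_one x y z + rank_one y x z) + b\<^sup>2 *\<^sub>R rank_one y y z"
proof -
  have real_factor: "(of_real r * c) *\<^sub>C v = r *\<^sub>R (c *\<^sub>C v)" for r c and v :: 'a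
    by (simp flip: scaleC_scaleC scaleC_of_real)
  show ?thesis
    by (simp add: rank_one_def cinner_add_right cinner_scaleR_right scaleC_add_left scaleC_add_right
        scaleC_scaleR_commute real_factor power2_eq_square algebra_simps)
qed

lemma rank_one_decomp:
  assumes "p * a1\<^sup>2 + q * a2\<^sup>2 = a" "p * b1\<^sup>2 + q * b2\<^sup>2 = 1" "p * a1 * b1 + q * a2 * b2 = 0"
  shows "a *\<^sub>R rank_one x x z + rank_one y y z =
    p *\<^sub>R rank_one (a1 *\<^sub>R x + b1 *\<^sub>R y) (a1 *\<^sub>R x + b1 *\<^sub>R y) z
    + q *\<^sub>R rank_one (a2 *\<^sub>R x + b2 *\<^sub>R y) (a2 *\<^sub>R x + b2 *\<^sub>R y) z"
proof -
  have "p *\<^sub>R rank_one (a1 *\<^sub>R x + b1 *\<^sub>R y) (a1 *\<^sub>R x + b1 *\<^sub>R y) z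
    + q *\<^sub>R rank_one (a2 *\<^sub>R x + b2 *\<^sub>R y) (a2 *\<^sub>R x + b2 *\<^sub>R y) z =
    (p * a1\<^sup>2 + q * a2\<^sup>2) *\<^sub>R rank_one x x z
    + (p * a1 * b1 + q * a2 * b2) *\<^sub>R (rank_one x y z + rank_one y x z)
    + (p * b1\<^sup>2 + q * b2\<^sup>2) *\<^sub>R rank_one y y z"
    by (simp add: rank_one_scaleR_add scaleR_add_right scaleR_add_left algebra_simps)
  then show ?thesis
    using assms by simp
qed

definition orth_rotate :: "'a::complex_inner \<Rightarrow> 'a \<Rightarrow> 'a" where
  "orth_rotate x y = (if cinner x y = 0 then y else (\<i> * sgn (cinner x y)) *\<^sub>C y)"

lemma orth_rotate_unimodular: obtains c where "cmod c = 1" "orth_rotate x y = c *\<^sub>C y"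
proof (cases "cinner x y = 0")
  case True
  then show ?thesis
    using that[of 1] scaleC_of_real[of 1 y] by (simp add: orth_rotate_def)
next
  case False
  then show ?thesis
    using that[of "\<i> * sgn (cinner x y)"] by (simp add: orth_rotate_def norm_mult norm_sgn)
qed

lemma inner_orth_rotate: "inner x (orth_rotate x y) = 0"
proof (cases "cinner x y = 0")
  case False
  define g where "g = cinner x y"
  have "cnj (sgn g) * g = of_real (cmod g)"
    using False unfolding g_def
    by (metis divide_conv_cnj divide_divide_eq_right mult.commute
        nonzero_mult_div_cancel_left norm_sgn sgn_eq)
  then show ?thesis
    using False by (simp add: orth_rotate_def cinner_scaleC_right flip: Re_cinner g_def)
qed (simp add: orth_rotate_def flip: Re_cinner)

lemma rank_one_orth_rotate: "rank_one (orth_rotate x y) (orth_rotate x y) = rank_one y y"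
  by (metis orth_rotate_unimodular rank_one_scaleC_self)

lemma norm_orth_rotate: "norm (orth_rotate x y) = norm y"
  by (metis orth_rotate_unimodular norm_scaleC mult_1)

lemma cmod_cinner_orth_rotate: "cmod (cinner z (orth_rotate x y)) = cmod (cinner z y)"
  by (metis orth_rotate_unimodular cinner_scaleC_right norm_mult complex_mod_cnj mult_1)

lemma norm_orthogonal_combination:
  assumes "norm x = 1" "norm y = 1" "inner x y = 0" "a\<^sup>2 + b\<^sup>2 = 1"
  shows "norm (a *\<^sub>R x + b *\<^sub>R y) = 1"
proof -
  have "(norm (a *\<^sub>R x + b *\<^sub>R y))\<^sup>2 = a\<^sup>2 + b\<^sup>2"
    using assms by (simp add: norm_add_Pythagorean orthogonal_def power_mult_distrib)
  then show ?thesis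
    using assms(4) norm_ge_zero[of "a *\<^sub>R x + b *\<^sub>R y"] by (auto simp: power2_eq_1_iff)
qed

text \<open>With x, y orthonormal, a1 x + b1 y and a2 x + b2 y are the unit vectors p, q of the plane with
diag (1 - (l + r)) 1 = (1 - l) p p^T + (1 - r) q q^T.\<close>

lemma split_coeffs:
  fixes l r :: real
  assumes "0 < l" "0 < r" "l + r < 1"
  defines "a1 \<equiv> sqrt (l * (1 - (l + r)) / ((l + r) * (1 - l)))"
    and "b1 \<equiv> sqrt (r / ((l + r) * (1 - l)))"
    and "a2 \<equiv> - sqrt (r * (1 - (l + r)) / ((l + r) * (1 - r)))"
    and "b2 \<equiv> sqrt (l / ((l + r) * (1 - r)))"
  shows "(1 - l) * a1\<^sup>2 + (1 - r) * a2\<^sup>2 = 1 - (l + r)"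
    and "(1 - l) * b1\<^sup>2 + (1 - r) * b2\<^sup>2 = 1"
    and "(1 - l) * a1 * b1 + (1 - r) * a2 * b2 = 0"
    and "a1\<^sup>2 + b1\<^sup>2 = 1"
    and "a2\<^sup>2 + b2\<^sup>2 = 1"
proof -
  have pos: "0 < l + r" "0 < 1 - (l + r)" "0 < 1 - l" "0 < 1 - r"
    using assms(1-3) by auto
  have sq: "a1\<^sup>2 = l * (1 - (l + r)) / ((l + r) * (1 - l))" "b1\<^sup>2 = r / ((l + r) * (1 - l))"
    "a2\<^sup>2 = r * (1 - (l + r)) / ((l + r) * (1 - r))" "b2\<^sup>2 = l / ((l + r) * (1 - r))"
    using assms(1,2) pos unfolding a1_def b1_def a2_def b2_def by simp_all
  have nonzero: "l + r \<noteq> 0" "1 - l \<noteq> 0" "1 - r \<noteq> 0"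
    using pos by auto
  show "(1 - l) * a1\<^sup>2 + (1 - r) * a2\<^sup>2 = 1 - (l + r)"
    and "(1 - l) * b1\<^sup>2 + (1 - r) * b2\<^sup>2 = 1"
    and "a1\<^sup>2 + b1\<^sup>2 = 1"
    and "a2\<^sup>2 + b2\<^sup>2 = 1"
    unfolding sq using nonzero by (simp_all add: divide_simps) (simp_all add: algebra_simps)
  define P where "P = l * r * (1 - (l + r))"
  have "a1 * b1 = sqrt (P / ((l + r) * (1 - l))\<^sup>2)"
    unfolding a1_def b1_def P_def real_sqrt_mult[symmetric] by (simp add: power2_eq_square ac_simps)
  then have "(1 - l) * a1 * b1 = sqrt P / (l + r)"
    using pos by (simp add: real_sqrt_divide abs_mult mult.assoc)
  moreover have "a2 * b2 = - sqrt (P / ((l + r) * (1 - r))\<^sup>2)"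
    unfolding a2_def b2_def P_def by (simp add: power2_eq_square ac_simps flip: real_sqrt_mult)
  then have "(1 - r) * a2 * b2 = - (sqrt P / (l + r))"
    using pos by (simp add: real_sqrt_divide abs_mult mult.assoc)
  ultimately show "(1 - l) * a1 * b1 + (1 - r) * a2 * b2 = 0"
    by simp
qed

lemma square_weighted_sum_le:
  fixes s t a b :: real
  assumes "0 \<le> t" "t \<le> 1" "0 \<le> s" "s\<^sup>2 = 1 - t\<^sup>2"
  shows "(t * a + s * b)\<^sup>2 \<le> t * a\<^sup>2 + 2 * b\<^sup>2"
proof -
  define u v where "u = sqrt (1 - t)" and "v = sqrt (1 + t)"
  have uu: "u * u = 1 - t" and vv: "v * v = 1 + t"
    using assms by (simp_all add: u_def v_def)
  have uv: "u * v = s"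
    using assms unfolding u_def v_def
    by (metis mult.commute mult.right_neutral power2_eq_square real_sqrt_mult
        real_sqrt_pow2 square_diff_square_factored)
  have "(u * a - v * b)\<^sup>2 = (u * u) * a\<^sup>2 - 2 * (u * v) * a * b + (v * v) * b\<^sup>2"
    by (simp add: power2_eq_square algebra_simps)
  also have "\<dots> = (1 - t) * a\<^sup>2 - 2 * s * a * b + (1 + t) * b\<^sup>2"
    by (simp only: uu vv uv)
  finally have "t * a\<^sup>2 + (1 + t) * b\<^sup>2 - (t * a + s * b)\<^sup>2 = t * (u * a - v * b)\<^sup>2"
    using assms(4) by algebra
  moreover have "0 \<le> t * (u * a - v * b)\<^sup>2" "t * b\<^sup>2 \<le> b\<^sup>2"
    using assms by (simp_all add: mult_left_le_one_le)
  ultimately show ?thesis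
    by (simp add: algebra_simps)
qed

definition split_vec :: "real \<Rightarrow> real \<Rightarrow> 'a::real_vector \<Rightarrow> 'a \<Rightarrow> 'a" where
  "split_vec l r x y = sqrt (l * (1 - (l + r)) / ((l + r) * (1 - l))) *\<^sub>R x
     + sqrt (r / ((l + r) * (1 - l))) *\<^sub>R y"

definition rest_vec :: "real \<Rightarrow> real \<Rightarrow> 'a::real_vector \<Rightarrow> 'a \<Rightarrow> 'a" where
  "rest_vec l r x y = - sqrt (r * (1 - (l + r)) / ((l + r) * (1 - r))) *\<^sub>R x
     + sqrt (l / ((l + r) * (1 - r))) *\<^sub>R y"

context
  fixes l r :: real
  assumes l_pos: "0 < l" and r_pos: "0 < r" and sum_less_1: "l + r < 1"
begin

lemma rank_one_split:
  "(1 - (l + r)) *\<^sub>R rank_one x x z + rank_one y y z =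
     (1 - l) *\<^sub>R rank_one (split_vec l r x y) (split_vec l r x y) z
     + (1 - r) *\<^sub>R rank_one (rest_vec l r x y) (rest_vec l r x y) z"
  unfolding split_vec_def rest_vec_def
  using split_coeffs[OF l_pos r_pos sum_less_1] by (intro rank_one_decomp)

lemma norm_split_vec:
  "\<lbrakk>norm x = 1; norm y = 1; inner x y = 0\<rbrakk> \<Longrightarrow> norm (split_vec l r x y) = 1"
  unfolding split_vec_def
  using split_coeffs[OF l_pos r_pos sum_less_1] by (intro norm_orthogonal_combination)

lemma norm_rest_vec:
  "\<lbrakk>norm x = 1; norm y = 1; inner x y = 0\<rbrakk> \<Longrightarrow> norm (rest_vec l r x y) = 1"
  unfolding rest_vec_def
  using split_coeffs[OF l_pos r_pos sum_less_1] by (intro norm_orthogonal_combination)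

lemma cmod_cinner_rest_vec_le:
  "(cmod (cinner z (rest_vec l r x y)))\<^sup>2
     \<le> sqrt (r / (l + r)) * (cmod (cinner z x))\<^sup>2 + 2 * (cmod (cinner z y))\<^sup>2 / (1 - r)"
proof -
  define t where "t = sqrt (r / (l + r))"
  define s where "s = sqrt (l / (l + r))"
  define a where "a = sqrt (r * (1 - (l + r)) / ((l + r) * (1 - r)))"
  have "r * (1 - (l + r)) / ((l + r) * (1 - r)) = r / (l + r) * ((1 - (l + r)) / (1 - r))"
    by simp
  also have "\<dots> \<le> r / (l + r) * 1"
    using l_pos r_pos sum_less_1 by (intro mult_left_mono) simp_all
  finally have coeff_x: "a \<le> t"
    unfolding a_def t_def by (intro real_sqrt_le_mono) simp
  have coeff_y: "sqrt (l / ((l + r) * (1 - r))) = s / sqrt (1 - r)"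
    by (simp add: s_def real_sqrt_divide real_sqrt_mult)
  have "cinner z (rest_vec l r x y) = of_real (- a) * cinner z x + of_real (s / sqrt (1 - r)) * cinner z y"
    unfolding rest_vec_def coeff_y a_def[symmetric] cinner_add_right cinner_scaleR_right by simp
  then have "cmod (cinner z (rest_vec l r x y))
      \<le> cmod (of_real (- a) * cinner z x) + cmod (of_real (s / sqrt (1 - r)) * cinner z y)"
    by (simp only: norm_triangle_ineq)
  also have "\<dots> = a * cmod (cinner z x) + s * (cmod (cinner z y) / sqrt (1 - r))"
    using l_pos r_pos sum_less_1 by (simp add: norm_mult norm_divide a_def s_def)
  also have "\<dots> \<le> t * cmod (cinner z x) + s * (cmod (cinner z y) / sqrt (1 - r))"
    using coeff_x by (simp add: mult_right_mono)
  finally have "(cmod (cinner z (rest_vec l r x y)))\<^sup>2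
      \<le> (t * cmod (cinner z x) + s * (cmod (cinner z y) / sqrt (1 - r)))\<^sup>2"
    by (rule power_mono) simp
  also have "\<dots> \<le> t * (cmod (cinner z x))\<^sup>2 + 2 * (cmod (cinner z y) / sqrt (1 - r))\<^sup>2"
    using l_pos r_pos by (intro square_weighted_sum_le) (simp_all add: t_def s_def field_simps)
  finally show ?thesis
    using sum_less_1 l_pos by (simp add: t_def power_divide)
qed

end

lemma damped_recurrence_tendsto_zero:
  fixes g e T :: "nat \<Rightarrow> real"
  assumes g_nonneg: "\<And>k. 0 \<le> g k"
    and rec: "\<And>k. g (Suc k) \<le> sqrt (T (Suc k) / T k) * g k + e (Suc k)"
    and e_nonneg: "\<And>k. 0 \<le> e k" and e_summable: "summable e"
    and T_pos: "\<And>k. 0 < T k" and T_decr: "\<And>k. T (Suc k) \<le> T k" and T_lim: "T \<longlonglongrightarrow> 0"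
  shows "g \<longlonglongrightarrow> 0"
proof -
  have bound: "g (m + N) \<le> sqrt (T (m + N) / T N) * g N + (\<Sum>i<m. e (i + Suc N))" for m N
  proof (induction m)
    case (Suc m)
    have damping: "sqrt (T (Suc (m + N)) / T (m + N)) \<le> 1"
      using T_pos T_decr by simp
    have telescope: "sqrt (T (Suc (m + N)) / T (m + N)) * sqrt (T (m + N) / T N) = sqrt (T (Suc (m + N)) / T N)"
      using T_pos[of "m + N"] by (simp flip: real_sqrt_mult)
    have "g (Suc m + N) \<le> sqrt (T (Suc (m + N)) / T (m + N)) * g (m + N) + e (Suc (m + N))"
      using rec by simp
    also have "\<dots> \<le> sqrt (T (Suc (m + N)) / T (m + N)) * (sqrt (T (m + N) / T N) * g N + (\<Sum>i<m. e (i + Suc N)))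
        + e (Suc (m + N))"
      using Suc.IH T_pos by (intro add_right_mono mult_left_mono) (simp_all add: less_imp_le)
    also have "\<dots> \<le> sqrt (T (Suc m + N) / T N) * g N + (\<Sum>i<m. e (i + Suc N)) + e (Suc (m + N))"
      using mult_left_le_one_le[OF _ _ damping, of "\<Sum>i<m. e (i + Suc N)"] T_pos e_nonneg
      by (simp add: distrib_left telescope less_imp_le sum_nonneg flip: mult.assoc)
    finally show ?case
      by (simp add: add.assoc)
  qed (use T_pos in \<open>simp add: less_imp_neq[symmetric]\<close>)
  show ?thesis
  proof (rule LIMSEQ_I)
    fix r :: real
    assume "0 < r"
    then obtain N where "\<forall>n\<ge>N. norm (\<Sum>i. e (i + n)) < r / 2"
      using suminf_exist_split[OF _ e_summable, of "r / 2"] by auto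
    then have N: "(\<Sum>i. e (i + Suc N)) < r / 2"
      by (auto dest!: spec[of _ "Suc N"])
    have "(\<lambda>n. sqrt (T n / T N) * g N) \<longlonglongrightarrow> sqrt (0 / T N) * g N"
      using T_pos[of N] by (intro tendsto_intros T_lim) simp
    then have "(\<lambda>n. sqrt (T n / T N) * g N) \<longlonglongrightarrow> 0"
      by simp
    from LIMSEQ_D[OF this, of "r / 2"] \<open>0 < r\<close>
    obtain M where M: "\<forall>n\<ge>M. norm (sqrt (T n / T N) * g N - 0) < r / 2"
      by auto
    have "g n < r" if "n \<ge> M + N" for n
    proof -
      define m where "m = n - N"
      have m: "n = m + N"
        using that by (simp add: m_def)
      have "(\<Sum>i<m. e (i + Suc N)) \<le> (\<Sum>i. e (i + Suc N))"
        using summable_ignore_initial_segment[OF e_summable, of "Suc N"] e_nonneg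
        by (intro sum_le_suminf) simp_all
      then show ?thesis
        using bound[of m N] M[rule_format, of n] N that m by simp
    qed
    then show "\<exists>n0. \<forall>n\<ge>n0. norm (g n - 0) < r"
      using g_nonneg by auto
  qed
qed

locale tail_splitting =
  fixes lam :: "nat \<Rightarrow> real" and u :: "nat \<Rightarrow> 'a::complex_inner"
  assumes lam_gt_0: "\<And>j. 0 < lam j" and summable_lam: "summable lam"
    and lam_sum_less_1: "suminf lam < 1" and norm_u: "\<And>j. norm (u j) = 1"
begin

definition tail :: "nat \<Rightarrow> real" where
  "tail k = (\<Sum>i. lam (i + k))"

lemma tail_Suc: "tail k = lam k + tail (Suc k)"
  using suminf_split_head[OF summable_ignore_initial_segment[OF summable_lam, of k]]
  by (simp add: tail_def)

lemma tail_pos: "0 < tail k"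
  unfolding tail_def using lam_gt_0 summable_ignore_initial_segment[OF summable_lam]
  by (intro suminf_pos) auto

lemma tail_decr: "tail (Suc k) \<le> tail k"
  using tail_Suc[of k] lam_gt_0[of k] by simp

lemma tail_le_suminf: "tail k \<le> suminf lam"
proof -
  have "tail k \<le> tail 0"
    using tail_decr by (induction k) (auto intro: order.trans)
  then show ?thesis
    by (simp add: tail_def)
qed

lemma tail_less_1: "tail k < 1"
  using tail_le_suminf lam_sum_less_1 by (rule le_less_trans)

lemma tail_tendsto_0: "tail \<longlonglongrightarrow> 0"
proof -
  have "tail = (\<lambda>k. suminf lam - (\<Sum>i<k. lam i))"
    by (simp add: fun_eq_iff tail_def suminf_minus_initial_segment[OF summable_lam])
  moreover have "(\<lambda>k. suminf lam - (\<Sum>i<k. lam i)) \<longlonglongrightarrow> suminf lam - suminf lam"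
    by (intro tendsto_intros summable_LIMSEQ summable_lam)
  ultimately show ?thesis
    by simp
qed

primrec residue :: "nat \<Rightarrow> 'a" where
  "residue 0 = u 0"
| "residue (Suc k) = rest_vec (lam k) (tail (Suc k)) (residue k) (orth_rotate (residue k) (u (Suc k)))"

definition proj_vec :: "nat \<Rightarrow> 'a" where
  "proj_vec k = split_vec (lam k) (tail (Suc k)) (residue k) (orth_rotate (residue k) (u (Suc k)))"

lemma split_params: "0 < lam k" "0 < tail (Suc k)" "lam k + tail (Suc k) < 1"
  using lam_gt_0 tail_pos tail_less_1[of k] by (simp_all flip: tail_Suc)

lemma norm_residue: "norm (residue k) = 1"
  by (induction k)
     (simp_all add: norm_u norm_rest_vec[OF split_params] inner_orth_rotate norm_orth_rotate)

lemma norm_proj_vec: "norm (proj_vec k) = 1"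
  by (simp add: proj_vec_def norm_split_vec[OF split_params] norm_residue norm_u
      inner_orth_rotate norm_orth_rotate)

lemma residue_step:
  "(1 - tail k) *\<^sub>R rank_one (residue k) (residue k) z + rank_one (u (Suc k)) (u (Suc k)) z =
     (1 - lam k) *\<^sub>R rank_one (proj_vec k) (proj_vec k) z
     + (1 - tail (Suc k)) *\<^sub>R rank_one (residue (Suc k)) (residue (Suc k)) z"
  using rank_one_split[OF split_params[of k], where x = "residue k" and y = "orth_rotate (residue k) (u (Suc k))"]
  by (simp add: proj_vec_def rank_one_orth_rotate flip: tail_Suc)

lemma partial_sums:
  "(\<Sum>j<n. (1 - lam j) *\<^sub>R rank_one (proj_vec j) (proj_vec j) z)
     + (1 - tail n) *\<^sub>R rank_one (residue n) (residue n) z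
   = (1 - suminf lam) *\<^sub>R rank_one (u 0) (u 0) z + (\<Sum>j<n. rank_one (u (Suc j)) (u (Suc j)) z)"
proof (induction n)
  case 0
  then show ?case
    by (simp add: tail_def)
next
  case (Suc n)
  let ?P = "\<lambda>j. (1 - lam j) *\<^sub>R rank_one (proj_vec j) (proj_vec j) z"
  let ?R = "\<lambda>n. (1 - tail n) *\<^sub>R rank_one (residue n) (residue n) z"
  let ?U = "\<lambda>j. rank_one (u (Suc j)) (u (Suc j)) z"
  have "(\<Sum>j<Suc n. ?P j) + ?R (Suc n) = (\<Sum>j<n. ?P j) + (?P n + ?R (Suc n))"
    by (simp add: add.assoc)
  also have "?P n + ?R (Suc n) = ?R n + ?U n"
    by (rule residue_step[symmetric])
  also have "(\<Sum>j<n. ?P j) + (?R n + ?U n) = ((\<Sum>j<n. ?P j) + ?R n) + ?U n"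
    by (rule add.assoc[symmetric])
  finally show ?case
    by (simp only: Suc.IH sum.lessThan_Suc add.assoc)
qed

lemma cmod_cinner_residue_Suc_le:
  "(cmod (cinner z (residue (Suc k))))\<^sup>2
     \<le> sqrt (tail (Suc k) / tail k) * (cmod (cinner z (residue k)))\<^sup>2
       + 2 * (cmod (cinner z (u (Suc k))))\<^sup>2 / (1 - suminf lam)"
proof -
  have "2 * (cmod (cinner z (u (Suc k))))\<^sup>2 / (1 - tail (Suc k))
      \<le> 2 * (cmod (cinner z (u (Suc k))))\<^sup>2 / (1 - suminf lam)"
    using tail_le_suminf[of "Suc k"] lam_sum_less_1 by (intro divide_left_mono) auto
  then show ?thesis
    using cmod_cinner_rest_vec_le[OF split_params[of k], where x = "residue k"
        and y = "orth_rotate (residue k) (u (Suc k))" and z = z]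
    by (simp add: cmod_cinner_orth_rotate flip: tail_Suc)
qed

lemma residue_term_tendsto_0:
  assumes "summable (\<lambda>j. (cmod (cinner z (u j)))\<^sup>2)"
  shows "(\<lambda>n. (1 - tail n) *\<^sub>R rank_one (residue n) (residue n) z) \<longlonglongrightarrow> 0"
proof -
  let ?g = "\<lambda>n. (cmod (cinner z (residue n)))\<^sup>2"
  have "?g \<longlonglongrightarrow> 0"
  proof (rule damped_recurrence_tendsto_zero[where T = tail
        and e = "\<lambda>k. 2 * (cmod (cinner z (u k)))\<^sup>2 / (1 - suminf lam)"])
    show "?g (Suc k) \<le> sqrt (tail (Suc k) / tail k) * ?g k
        + 2 * (cmod (cinner z (u (Suc k))))\<^sup>2 / (1 - suminf lam)" for k
      by (rule cmod_cinner_residue_Suc_le)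
    show "summable (\<lambda>k. 2 * (cmod (cinner z (u k)))\<^sup>2 / (1 - suminf lam))"
      using assms by (intro summable_divide summable_mult)
  qed (use tail_pos tail_decr tail_tendsto_0 lam_sum_less_1 in simp_all)
  then have "(\<lambda>n. sqrt (?g n)) \<longlonglongrightarrow> sqrt 0"
    by (rule tendsto_real_sqrt)
  then have lim: "(\<lambda>n. sqrt (?g n)) \<longlonglongrightarrow> 0"
    by simp
  have bound: "norm ((1 - tail n) *\<^sub>R rank_one (residue n) (residue n) z) \<le> sqrt (?g n)" for n
    using tail_pos[of n] tail_less_1[of n]
    by (simp add: norm_rank_one_self norm_residue mult_left_le_one_le)
  show ?thesis
    by (rule Lim_null_comparison[OF always_eventually[OF allI[OF bound]] lim])
qed

lemma proj_vec_sums: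
  assumes "(\<lambda>j. rank_one (u (Suc j)) (u (Suc j)) z) sums b"
  shows "(\<lambda>j. (1 - lam j) *\<^sub>R rank_one (proj_vec j) (proj_vec j) z)
    sums ((1 - suminf lam) *\<^sub>R rank_one (u 0) (u 0) z + b)"
proof -
  have "(\<lambda>j. inner (rank_one (u (Suc j)) (u (Suc j)) z) z) sums inner b z"
    using bounded_linear.sums[OF bounded_linear_inner_left assms] .
  then have "summable (\<lambda>j. (cmod (cinner z (u j)))\<^sup>2)"
    by (subst summable_Suc_iff[symmetric]) (auto simp: inner_rank_one_self dest: sums_summable)
  then have "(\<lambda>n. (1 - suminf lam) *\<^sub>R rank_one (u 0) (u 0) z
        + (\<Sum>j<n. rank_one (u (Suc j)) (u (Suc j)) z)
        - (1 - tail n) *\<^sub>R rank_one (residue n) (residue n) z)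
      \<longlonglongrightarrow> (1 - suminf lam) *\<^sub>R rank_one (u 0) (u 0) z + b - 0"
    using assms unfolding sums_def by (intro tendsto_intros residue_term_tendsto_0)
  then show ?thesis
    unfolding sums_def by (simp flip: partial_sums)
qed

end

theorem lemma3p12:
  fixes lam :: "nat \<Rightarrow> real"
    and u :: "nat \<Rightarrow> 'h::{complex_inner, complete_space}"
  assumes sep: "separable_space TYPE('h)"
    and lam_pos: "\<forall>j. 0 < lam j \<and> lam j < 1/2"
    and lam_summable: "summable lam"
    and lam_sum: "suminf lam < 1"
    and u_unit: "\<forall>j. norm (u j) = 1"
    and tail_conv: "sot_summable (\<lambda>j. rank_one (u (Suc j)) (u (Suc j)))"
  shows "(\<lambda>j. 1 - lam j) \<in> Adm (\<lambda>z. complex_of_real (1 - suminf lam) *\<^sub>C rank_one (u 0) (u 0) z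
            + (\<Sum>j. rank_one (u (Suc j)) (u (Suc j)) z))"
proof -
  interpret tail_splitting lam u
    using lam_pos lam_summable lam_sum u_unit by unfold_locales auto
  obtain B where B: "\<And>z. (\<lambda>j. rank_one (u (Suc j)) (u (Suc j)) z) sums B z"
    using tail_conv by (auto simp: sot_summable_def sot_sums_def)
  have "(\<Sum>j. rank_one (u (Suc j)) (u (Suc j)) z) = B z" for z
    using B by (rule sums_unique[symmetric])
  then have sums: "sot_sums (\<lambda>j z. complex_of_real (1 - lam j) *\<^sub>C rank_one (proj_vec j) (proj_vec j) z)
      (\<lambda>z. complex_of_real (1 - suminf lam) *\<^sub>C rank_one (u 0) (u 0) z
        + (\<Sum>j. rank_one (u (Suc j)) (u (Suc j)) z))"
    unfolding sot_sums_def scaleC_of_real using proj_vec_sums[OF B] by simp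
  have proj: "rank_one_proj (rank_one (proj_vec j) (proj_vec j))" for j
    using norm_proj_vec by (auto simp: rank_one_proj_def)
  have weight_bounds: "0 \<le> 1 - lam j" "1 - lam j \<le> 1" for j
    using lam_pos[rule_format, of j] by simp_all
  then have "bdd_above (range (\<lambda>j. 1 - lam j))"
    by (intro bdd_aboveI2)
  then show ?thesis
    unfolding Adm_def mem_Collect_eq
    by (intro conjI allI exI[of _ "\<lambda>j. rank_one (proj_vec j) (proj_vec j)"] sums proj weight_bounds)
qed

end
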